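(* Let $R$ be a ring, $P$ a polygon, $D$ a dissection of $P$, and $c:\operatorname{diag}P\to R$ a map. The following are equivalent: (i) $c$ is a weak frieze with respect to $D$; (ii) $c_{tv}\in R^*$ for every $(t,v)\in D$, and for all distinct vertices $i,k$ of $P$, \[ c_{ik}=\sum_{p\in\mathscr{P}(D,i,k)} c_p . \]
   Context: $R^*$ denotes the set of invertible elements of $R$. A polygon $P$ is a finite set $V$ of at least three vertices with a cyclic ordering, thought of as geometrically realised as a convex polygon in the plane. $\operatorname{diag}P$ is the set of ordered pairs $(i,k)$ of distinct vertices (diagonals); $(i,k)$ is an edge if $i,k$ are neighbours in the cyclic order, otherwise an internal diagonal. Diagonals $(i,k)$ and $(j,\ell)$ cross if $i,j,k,\ell$ are pairwise distinct and $i<j<k<\ell$ or $i<\ell<k<j$ in the cyclic order. A dissection of $P$ is a set $D$ of internal diagonals such that $(i,k)\in D$ implies $(k,i)\in D$, and no two diagonals in $D$ cross. We write $c_{ik}=c(i,k)$ and use the convention $c_{xx}=0$. A map $c:\operatorname{diag}P\to R$ is a weak frieze with respect to $D$ if (1) $c_{tv}\in R^*$ for all $(t,v)\in D$, and (2) whenever $(i,k)$ crosses $(t,v)$ with $(t,v),(v,t)\in D$, one has $c_{ik}=c_{it}c_{vt}^{-1}c_{vk}+c_{iv}c_{tv}^{-1}c_{tk}$. A sequence $(p_1,\ldots,p_\pi)$ of vertices is a $T$-path from $p_1$ to $p_\pi$ with respect to $D$ if: $p_1\neq p_\pi$; the sets $\{p_1,p_2\},\{p_2,p_3\},\ldots,\{p_{\pi-1},p_\pi\}$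 are pairwise different and each has two elements; no diagonal $(p_\alpha,p_{\alpha+1})$ crosses a diagonal in $D$; each diagonal $(p_{2\alpha},p_{2\alpha+1})$ lies in $D$ and crosses $(p_1,p_\pi)$, and these crossing points progress monotonically in the direction from $p_1$ to $p_\pi$. (Then $\pi$ is even.) $\mathscr{P}(D,i,k)$ denotes the set of $T$-paths from $i$ to $k$ with respect to $D$. For such a $T$-path $p$ (assuming $c_{tv}\in R^*$ for $(t,v)\in D$), $c_p=c_{p_1p_2}c_{p_3p_2}^{-1}c_{p_3p_4}c_{p_5p_4}^{-1}\cdots c_{p_{\pi-1}p_{\pi-2}}^{-1}c_{p_{\pi-1}p_\pi}$. *)

theory Defs
  imports Main
begin

text \<open>The polygon P has vertex set {0..<n} (n \<ge> 3) with the cyclic order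
  0, 1, ..., n-1, 0.  Diagonals are pairs of distinct vertices.\<close>

definition cyc3 :: "nat \<Rightarrow> nat \<Rightarrow> nat \<Rightarrow> bool" where
  "cyc3 a b c \<longleftrightarrow> (a < b \<and> b < c) \<or> (b < c \<and> c < a) \<or> (c < a \<and> a < b)"

definition cyc4 :: "nat \<Rightarrow> nat \<Rightarrow> nat \<Rightarrow> nat \<Rightarrow> bool" where
  "cyc4 a b c d \<longleftrightarrow> (a < b \<and> b < c \<and> c < d) \<or> (b < c \<and> c < d \<and> d < a)
                    \<or> (c < d \<and> d < a \<and> a < b) \<or> (d < a \<and> a < b \<and> b < c)"

definition crosses :: "nat \<times> nat \<Rightarrow> nat \<times> nat \<Rightarrow> bool" where
  "crosses d e \<longleftrightarrow> (case d of (i, k) \<Rightarrow> case e of (j, l) \<Rightarrow>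
      distinct [i, j, k, l] \<and> (cyc4 i j k l \<or> cyc4 i l k j))"

definition neighbours :: "nat \<Rightarrow> nat \<Rightarrow> nat \<Rightarrow> bool" where
  "neighbours n i k \<longleftrightarrow> k = (i + 1) mod n \<or> i = (k + 1) mod n"

definition internal_diag :: "nat \<Rightarrow> nat \<times> nat \<Rightarrow> bool" where
  "internal_diag n d \<longleftrightarrow> (case d of (i, k) \<Rightarrow>
      i < n \<and> k < n \<and> i \<noteq> k \<and> \<not> neighbours n i k)"

definition dissection :: "nat \<Rightarrow> (nat \<times> nat) set \<Rightarrow> bool" where
  "dissection n D \<longleftrightarrow> (\<forall>d\<in>D. internal_diag n d)
     \<and> (\<forall>i k. (i, k) \<in> D \<longrightarrow> (k, i) \<in> D)
     \<and> (\<forall>d\<in>D. \<forall>e\<in>D. \<not> crosses d e)"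

definition is_unit :: "'a::ring_1 \<Rightarrow> bool" where
  "is_unit x \<longleftrightarrow> (\<exists>y. x * y = 1 \<and> y * x = 1)"

definition uinv :: "'a::ring_1 \<Rightarrow> 'a" where
  "uinv x = (SOME y. x * y = 1 \<and> y * x = 1)"

definition weak_frieze :: "nat \<Rightarrow> (nat \<times> nat) set \<Rightarrow> (nat \<Rightarrow> nat \<Rightarrow> 'a::ring_1) \<Rightarrow> bool" where
  "weak_frieze n D c \<longleftrightarrow> (\<forall>(t, v)\<in>D. is_unit (c t v))
     \<and> (\<forall>i k t v. i < n \<longrightarrow> k < n \<longrightarrow> (t, v) \<in> D \<longrightarrow> (v, t) \<in> D \<longrightarrow> crosses (i, k) (t, v) \<longrightarrow>
          c i k = c i t * uinv (c v t) * c v k + c i v * uinv (c t v) * c t k)"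

text \<open>Combinatorial description of the order of crossing points along the diagonal (i,k):
  the vertex x lies in the closed half-plane bounded by the chord (a,b) that contains k.\<close>

definition on_k_side :: "nat \<Rightarrow> nat \<Rightarrow> nat \<Rightarrow> nat \<Rightarrow> bool" where
  "on_k_side a b k x \<longleftrightarrow> x = a \<or> x = b \<or> (cyc3 a x b \<longleftrightarrow> cyc3 a k b)"

text \<open>For diagonals d, e both crossing (i,k): the crossing point of d with (i,k) comes
  strictly before that of e, in the direction from i to k.\<close>

definition before :: "nat \<Rightarrow> nat \<Rightarrow> nat \<times> nat \<Rightarrow> nat \<times> nat \<Rightarrow> bool" where
  "before i k d e \<longleftrightarrow> (case d of (a, b) \<Rightarrow> case e of (x, y) \<Rightarrow>
      {a, b} \<noteq> {x, y} \<and> on_k_side a b k x \<and> on_k_side a b k y)"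

text \<open>T-paths as lists p = [p_1, ..., p_pi] (0-indexed in Isabelle: p!0 = p_1).
  The 1-indexed step (p_{2a}, p_{2a+1}) is the 0-indexed step (p!j, p!(j+1)) with j odd.\<close>

definition is_tpath :: "nat \<Rightarrow> (nat \<times> nat) set \<Rightarrow> nat \<Rightarrow> nat \<Rightarrow> nat list \<Rightarrow> bool" where
  "is_tpath n D i k p \<longleftrightarrow>
     length p \<ge> 2 \<and> hd p = i \<and> last p = k \<and> i \<noteq> k \<and> set p \<subseteq> {..<n}
     \<and> (\<forall>a < length p - 1. p ! a \<noteq> p ! (a + 1))
     \<and> (\<forall>a < length p - 1. \<forall>b < length p - 1. a \<noteq> b \<longrightarrow>
            {p ! a, p ! (a + 1)} \<noteq> {p ! b, p ! (b + 1)})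
     \<and> (\<forall>a < length p - 1. \<forall>d\<in>D. \<not> crosses (p ! a, p ! (a + 1)) d)
     \<and> (\<forall>a < length p - 1. odd a \<longrightarrow>
            (p ! a, p ! (a + 1)) \<in> D \<and> crosses (p ! a, p ! (a + 1)) (i, k))
     \<and> (\<forall>a < length p - 1. \<forall>b < length p - 1. odd a \<longrightarrow> odd b \<longrightarrow> a < b \<longrightarrow>
            before i k (p ! a, p ! (a + 1)) (p ! b, p ! (b + 1)))"

definition tpaths :: "nat \<Rightarrow> (nat \<times> nat) set \<Rightarrow> nat \<Rightarrow> nat \<Rightarrow> nat list set" where
  "tpaths n D i k = {p. is_tpath n D i k p}"

fun tweight :: "(nat \<Rightarrow> nat \<Rightarrow> 'a::ring_1) \<Rightarrow> nat list \<Rightarrow> 'a" where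
  "tweight c (a # b # d # rest) = c a b * uinv (c d b) * tweight c (d # rest)"
| "tweight c [a, b] = c a b"
| "tweight c _ = 1"

end

theory Submission
  imports Defs
begin

text \<open>
  Suppose (i, k) crosses some diagonal of D, and let (a, b) be the first one it crosses, so that
  (i, a) and (i, b) are sides of the cell of D at i. Every T-path from i to k begins with i, a or
  with i, b, and the T-paths beginning with i, a correspond bijectively to the T-paths from b to k
  (replace the first vertex b by i if the path continues with a, otherwise prepend i, a). Hence
  the T-path sums S satisfy S_ik = c_ia c_ba^-1 S_bk + c_ib c_ab^-1 S_ak. As (b, k) and (a, k)
  cross fewer diagonals of D than (i, k), induction on this number shows that S satisfies all
  exchange relations of a weak frieze. Conversely, by the same induction the exchange relations
  determine a weak frieze from its values on the diagonals that cross no diagonal of D, and there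
  S agrees with c because the only T-path along such a diagonal is the diagonal itself.
\<close>

section \<open>Crossing diagonals\<close>

lemma crosses_commute: "crosses d e = crosses e d"
  by (cases d; cases e; auto simp: crosses_def cyc4_def)

lemma crosses_flip_left: "crosses (a, b) e = crosses (b, a) e"
  by (cases e; auto simp: crosses_def cyc4_def)

lemma crosses_flip_right: "crosses e (a, b) = crosses e (b, a)"
  using crosses_commute crosses_flip_left by metis

lemma crosses_distinct:
  "crosses (x, y) (u, w) \<Longrightarrow> x \<noteq> y \<and> u \<noteq> w \<and> x \<noteq> u \<and> x \<noteq> w \<and> y \<noteq> u \<and> y \<noteq> w"
  by (auto simp: crosses_def)

lemma crosses_min_max_iff: "crosses (a, b) (x, y) \<longleftrightarrow>
    min a b < x \<and> x < max a b \<and> (y < min a b \<or> max a b < y) \<or>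
    min a b < y \<and> y < max a b \<and> (x < min a b \<or> max a b < x)"
  unfolding crosses_def cyc4_def min_def max_def by auto

lemma crosses_zero_iff:
  "crosses (a, b) (0, k) \<longleftrightarrow> 0 < a \<and> 0 < b \<and> min a b < k \<and> k < max a b"
  unfolding crosses_def cyc4_def min_def max_def by auto

lemma before_zero_iff:
  assumes "crosses (a, b) (0, k)"
  shows "before j k (a, b) (x, y) \<longleftrightarrow>
    {a, b} \<noteq> {x, y} \<and> min a b \<le> x \<and> x \<le> max a b \<and> min a b \<le> y \<and> y \<le> max a b"
  using assms unfolding crosses_zero_iff before_def on_k_side_def cyc3_def min_def max_def
  by (auto split: if_splits)

lemma crosses_through_endpoint_zero:
  assumes "crosses (a, b) (0, k)" "crosses (x, y) (b, k)" "\<not> crosses (x, y) (a, b)"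
  shows "crosses (x, y) (0, k)"
  using assms unfolding crosses_zero_iff crosses_commute[of "(x, y)"] crosses_min_max_iff
  by (auto simp: min_def max_def split: if_splits)

lemma before_if_sides_uncrossed_zero:
  assumes "crosses (a, b) (0, k)" "\<not> crosses (0, a) (x, y)" "\<not> crosses (0, b) (x, y)"
    "crosses (x, y) (0, k)" "{x, y} \<noteq> {a, b}"
  shows "before 0 k (a, b) (x, y)"
  using assms unfolding before_zero_iff[OF assms(1)]
  unfolding crosses_zero_iff crosses_min_max_iff
  by (auto simp: min_def max_def split: if_splits)

lemma crosses_endpoint_diag_if_before_zero:
  assumes "crosses (a, b) (0, k)" "before 0 k (a, b) (x, y)" "crosses (x, y) (0, k)" "x \<noteq> b" "y \<noteq> b"
  shows "crosses (x, y) (b, k)"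
  using assms unfolding before_zero_iff[OF assms(1)]
  unfolding crosses_zero_iff crosses_commute[of "(x, y)"] crosses_min_max_iff
  by (auto simp: min_def max_def split: if_splits)

lemma crosses_from_start_if_before_zero:
  assumes "crosses (a, b) (0, k)" "before 0 k (a, b) (x, y)" "x \<noteq> a" "x \<noteq> b"
  shows "crosses (0, x) (a, b)"
  using assms unfolding before_zero_iff[OF assms(1)]
  unfolding crosses_zero_iff crosses_commute[of "(0, x)"] crosses_min_max_iff
  by (auto simp: min_def max_def split: if_splits)

lemma before_shared_vertex_zero:
  assumes "crosses (a, b) (0, k)" "crosses (f, g) (0, k)"
    "before 0 k (a, b) (f, g)" "before 0 k (f, g) (x, y)" "v \<in> {a, b}" "v \<in> {x, y}"
  shows "v \<in> {f, g}"
proof -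
  have "min a b \<le> min f g" "max f g \<le> max a b" "min f g \<le> v" "v \<le> max f g"
    using assms(3,4,6) unfolding before_zero_iff[OF assms(1)] before_zero_iff[OF assms(2)] by auto
  moreover have "v = min a b \<or> v = max a b"
    using assms(5) by auto
  ultimately have "v = min f g \<or> v = max f g"
    by linarith
  then show ?thesis
    unfolding min_def max_def by (auto split: if_splits)
qed

text \<open>
  Relabelling the vertices cyclically so that i becomes 0 preserves crossings and the order of
  crossing points. This reduces the statements below about a diagonal (i, k) to the case i = 0
  treated above, where the cyclic order is the order of nat.
\<close>

definition rotation :: "nat \<Rightarrow> nat \<Rightarrow> nat \<Rightarrow> nat" where
  "rotation n i x = (if i \<le> x then x - i else x + n - i)"

lemma rotation_self: "rotation n i i = 0"
  by (simp add: rotation_def)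

lemma rotation_eq_iff:
  "x < n \<Longrightarrow> y < n \<Longrightarrow> i < n \<Longrightarrow> rotation n i x = rotation n i y \<longleftrightarrow> x = y"
  unfolding rotation_def by (cases "i \<le> x"; cases "i \<le> y"; simp; linarith)

lemma rotation_cyc3:
  assumes "x < n" "y < n" "z < n" "i < n"
  shows "cyc3 (rotation n i x) (rotation n i y) (rotation n i z) \<longleftrightarrow> cyc3 x y z"
  using assms unfolding rotation_def cyc3_def
  by (cases "i \<le> x"; cases "i \<le> y"; cases "i \<le> z"; simp; linarith)

lemma cyc4_iff_cyc3: "cyc4 a b c d \<longleftrightarrow> cyc3 a b c \<and> cyc3 a c d"
  unfolding cyc4_def cyc3_def by auto

lemma crosses_iff_cyc3: "crosses (i, k) (j, l) \<longleftrightarrow>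
    distinct [i, j, k, l] \<and> (cyc3 i j k \<and> cyc3 i k l \<or> cyc3 i l k \<and> cyc3 i k j)"
  unfolding crosses_def cyc4_iff_cyc3 by simp

lemma rotation_crosses:
  assumes "a < n" "b < n" "x < n" "y < n" "i < n"
  shows "crosses (rotation n i a, rotation n i b) (rotation n i x, rotation n i y) \<longleftrightarrow>
    crosses (a, b) (x, y)"
  using assms by (simp add: crosses_iff_cyc3 rotation_cyc3 rotation_eq_iff)

lemma rotation_before:
  assumes "a < n" "b < n" "x < n" "y < n" "k < n" "i < n"
  shows "before (rotation n i i) (rotation n i k) (rotation n i a, rotation n i b)
      (rotation n i x, rotation n i y) \<longleftrightarrow> before i k (a, b) (x, y)"
  using assms
  by (simp add: before_def on_k_side_def rotation_cyc3 rotation_eq_iff doubleton_eq_iff)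

lemma crosses_through_endpoint:
  assumes "a < n" "b < n" "i < n" "k < n" "x < n" "y < n"
    and "crosses (a, b) (i, k)" "crosses (x, y) (b, k)" "\<not> crosses (x, y) (a, b)"
  shows "crosses (x, y) (i, k)"
  using crosses_through_endpoint_zero[of "rotation n i a" "rotation n i b" "rotation n i k"
      "rotation n i x" "rotation n i y", unfolded rotation_self[of n i, symmetric]] assms
  by (simp add: rotation_crosses)

lemma before_if_sides_uncrossed:
  assumes "a < n" "b < n" "i < n" "k < n" "x < n" "y < n"
    and "crosses (a, b) (i, k)" "\<not> crosses (i, a) (x, y)" "\<not> crosses (i, b) (x, y)"
      "crosses (x, y) (i, k)" "{x, y} \<noteq> {a, b}"
  shows "before i k (a, b) (x, y)"
  using before_if_sides_uncrossed_zero[of "rotation n i a" "rotation n i b" "rotation n i k"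
      "rotation n i x" "rotation n i y", unfolded rotation_self[of n i, symmetric]] assms
  by (simp add: rotation_crosses rotation_before rotation_eq_iff doubleton_eq_iff)

lemma crosses_endpoint_diag_if_before:
  assumes "a < n" "b < n" "i < n" "k < n" "x < n" "y < n"
    and "crosses (a, b) (i, k)" "before i k (a, b) (x, y)" "crosses (x, y) (i, k)" "x \<noteq> b" "y \<noteq> b"
  shows "crosses (x, y) (b, k)"
  using crosses_endpoint_diag_if_before_zero[of "rotation n i a" "rotation n i b" "rotation n i k"
      "rotation n i x" "rotation n i y", unfolded rotation_self[of n i, symmetric]] assms
  by (simp add: rotation_crosses rotation_before rotation_eq_iff)

lemma crosses_from_start_if_before:
  assumes "a < n" "b < n" "i < n" "k < n" "x < n" "y < n"
    and "crosses (a, b) (i, k)" "before i k (a, b) (x, y)" "x \<noteq> a" "x \<noteq> b"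
  shows "crosses (i, x) (a, b)"
  using crosses_from_start_if_before_zero[of "rotation n i a" "rotation n i b" "rotation n i k"
      "rotation n i x" "rotation n i y", unfolded rotation_self[of n i, symmetric]] assms
  by (simp add: rotation_crosses rotation_before rotation_eq_iff)

lemma before_shared_vertex:
  assumes "a < n" "b < n" "i < n" "k < n" "x < n" "y < n" "f < n" "g < n" "v < n"
    and "crosses (a, b) (i, k)" "crosses (f, g) (i, k)"
      "before i k (a, b) (f, g)" "before i k (f, g) (x, y)" "v \<in> {a, b}" "v \<in> {x, y}"
  shows "v \<in> {f, g}"
  using before_shared_vertex_zero[of "rotation n i a" "rotation n i b" "rotation n i k"
      "rotation n i f" "rotation n i g" "rotation n i x" "rotation n i y" "rotation n i v",
      unfolded rotation_self[of n i, symmetric]] assms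
  by (auto simp: rotation_crosses rotation_before rotation_eq_iff)

section \<open>The first diagonal crossed\<close>

definition uncrossed :: "(nat \<times> nat) set \<Rightarrow> nat \<times> nat \<Rightarrow> bool" where
  "uncrossed D e \<longleftrightarrow> (\<forall>d\<in>D. \<not> crosses e d)"

definition crossing_count :: "(nat \<times> nat) set \<Rightarrow> nat \<Rightarrow> nat \<Rightarrow> nat" where
  "crossing_count D i k = card {e \<in> D. crosses e (i, k)}"

definition side_crossings :: "(nat \<times> nat) set \<Rightarrow> nat \<Rightarrow> nat \<Rightarrow> nat \<Rightarrow> nat" where
  "side_crossings D i x y = card {h \<in> D. crosses h (i, x) \<or> crosses h (i, y)}"

lemma crossing_count_commute: "crossing_count D i k = crossing_count D k i"
  unfolding crossing_count_def using crosses_flip_right by metis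

text \<open>
  (a, b) is the side opposite i of the cell of D that (i, k) enters at i, that is, the first
  diagonal of D crossed by (i, k).
\<close>

locale first_diagonal =
  fixes n :: nat and D :: "(nat \<times> nat) set" and i k a b :: nat
  assumes dissection: "dissection n D" and i_less: "i < n" and k_less: "k < n"
    and ab_mem: "(a, b) \<in> D" and ab_crosses: "crosses (a, b) (i, k)"
    and ia_uncrossed: "uncrossed D (i, a)" and ib_uncrossed: "uncrossed D (i, b)"

context
  fixes n :: nat and D :: "(nat \<times> nat) set"
  assumes dissection: "dissection n D"
begin

lemma dissection_memD: "(x, y) \<in> D \<Longrightarrow> x < n \<and> y < n \<and> x \<noteq> y \<and> (y, x) \<in> D"
  using dissection unfolding dissection_def internal_diag_def by auto

lemma dissection_uncrossed: "d \<in> D \<Longrightarrow> uncrossed D d"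
  using dissection unfolding dissection_def uncrossed_def by auto

lemma dissection_finite: "finite D"
proof -
  have "D \<subseteq> {..<n} \<times> {..<n}"
    using dissection_memD by auto
  then show ?thesis
    by (rule finite_subset) auto
qed

lemma crosses_via_endpoint:
  assumes "(a, b) \<in> D" "crosses (a, b) (i, k)" "e \<in> D" "crosses e (b, k)" "i < n" "k < n"
  shows "crosses e (i, k)"
proof (cases e)
  case (Pair x y)
  have "\<not> crosses (x, y) (a, b)"
    using dissection_uncrossed[OF assms(3)] assms(1) Pair unfolding uncrossed_def by blast
  moreover have "a < n" "b < n" "x < n" "y < n"
    using dissection_memD assms(1,3) Pair by auto
  ultimately show ?thesis
    using crosses_through_endpoint[of a n b i k x y] assms Pair by blast
qed

lemma crosses_via_endpoint_mirror:
  assumes "(a, b) \<in> D" "crosses (a, b) (i, k)" "e \<in> D" "crosses e (i, b)" "i < n" "k < n"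
  shows "crosses e (i, k)"
  using crosses_via_endpoint[of a b k i e] assms crosses_flip_right by metis

lemma crossing_count_less:
  assumes "(a, b) \<in> D" "crosses (a, b) (i, k)" "i < n" "k < n"
  shows "crossing_count D b k < crossing_count D i k"
proof -
  have "{e \<in> D. crosses e (b, k)} \<subset> {e \<in> D. crosses e (i, k)}"
  proof
    show "{e \<in> D. crosses e (b, k)} \<subseteq> {e \<in> D. crosses e (i, k)}"
      using crosses_via_endpoint assms by blast
    show "{e \<in> D. crosses e (b, k)} \<noteq> {e \<in> D. crosses e (i, k)}"
      using assms(1,2) crosses_distinct[of a b b k] by blast
  qed
  then show ?thesis
    unfolding crossing_count_def using dissection_finite by (simp add: psubset_card_mono)
qed

lemma crossing_count_less_mirror:
  assumes "(a, b) \<in> D" "crosses (a, b) (i, k)" "i < n" "k < n"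
  shows "crossing_count D i b < crossing_count D i k"
  using crossing_count_less[of a b k i] assms crossing_count_commute crosses_flip_right by metis

lemma side_crossings_less:
  assumes "(x, y) \<in> D" "(g1, g2) \<in> D" "crosses (g1, g2) (i, x)" "i < n"
  shows "side_crossings D i g1 g2 < side_crossings D i x y"
proof -
  have "x < n" "(g2, g1) \<in> D" "crosses (g2, g1) (i, x)"
    using dissection_memD assms(1-3) crosses_flip_left by metis+
  then have "{h \<in> D. crosses h (i, g1) \<or> crosses h (i, g2)}
      \<subseteq> {h \<in> D. crosses h (i, x) \<or> crosses h (i, y)}"
    using crosses_via_endpoint_mirror[of g2 g1 i x] crosses_via_endpoint_mirror[of g1 g2 i x]
      assms by blast
  moreover have "(g1, g2) \<notin> {h \<in> D. crosses h (i, g1) \<or> crosses h (i, g2)}"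
    using crosses_distinct[of g1 g2 i] by blast
  ultimately have "{h \<in> D. crosses h (i, g1) \<or> crosses h (i, g2)}
      \<subset> {h \<in> D. crosses h (i, x) \<or> crosses h (i, y)}"
    using assms(2,3) by blast
  then show ?thesis
    unfolding side_crossings_def using dissection_finite by (simp add: psubset_card_mono)
qed

lemma first_diagonal_exists:
  assumes "i < n" "k < n" "\<not> uncrossed D (i, k)"
  shows "\<exists>a b. first_diagonal n D i k a b"
proof -
  obtain e where "e \<in> D" "crosses e (i, k)"
    using assms(3) crosses_commute unfolding uncrossed_def by blast
  then obtain a b where ab: "(a, b) \<in> D" "crosses (a, b) (i, k)"
    and least: "\<And>x y. (x, y) \<in> D \<Longrightarrow> crosses (x, y) (i, k) \<Longrightarrow>
      side_crossings D i a b \<le> side_crossings D i x y"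
    using ex_has_least_nat[of "\<lambda>(x, y). (x, y) \<in> D \<and> crosses (x, y) (i, k)" e
        "\<lambda>(x, y). side_crossings D i x y"]
    by auto
  have "uncrossed D (i, x)"
    if xy: "(x, y) \<in> D" "crosses (x, y) (i, k)" "side_crossings D i x y = side_crossings D i a b"
    for x y
    unfolding uncrossed_def
  proof (intro ballI notI)
    fix g assume g: "g \<in> D" "crosses (i, x) g"
    have "(y, x) \<in> D" "crosses (y, x) (i, k)"
      using dissection_memD xy(1,2) crosses_flip_left by metis+
    then have "crosses g (i, k)"
      using crosses_via_endpoint_mirror g assms(1,2) crosses_commute by metis
    moreover have "side_crossings D i (fst g) (snd g) < side_crossings D i x y"
      using side_crossings_less[of x y "fst g" "snd g"] xy(1) g assms(1) crosses_commute by simp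
    ultimately show False
      using least[of "fst g" "snd g"] g(1) xy(3) by simp
  qed
  moreover have "(b, a) \<in> D" "crosses (b, a) (i, k)" "side_crossings D i b a = side_crossings D i a b"
    using ab dissection_memD crosses_flip_left unfolding side_crossings_def by metis+
  ultimately have "uncrossed D (i, a)" "uncrossed D (i, b)"
    using ab by blast+
  then show ?thesis
    using ab assms dissection by (auto simp: first_diagonal_def)
qed

end

context first_diagonal
begin

lemma vertex_facts: "a < n" "b < n" "a \<noteq> b" "(b, a) \<in> D"
    "i \<noteq> k" "i \<noteq> a" "i \<noteq> b" "k \<noteq> a" "k \<noteq> b"
  using dissection_memD[OF dissection ab_mem] crosses_distinct[OF ab_crosses] by auto

lemma swap: "first_diagonal n D i k b a"
  using first_diagonal_axioms vertex_facts(4) ab_crosses crosses_flip_left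
  unfolding first_diagonal_def by metis

lemma not_uncrossed: "\<not> uncrossed D (i, k)"
  using ab_mem ab_crosses crosses_commute unfolding uncrossed_def by blast

lemma crosses_ik_if_crosses_bk: "e \<in> D \<Longrightarrow> crosses e (b, k) \<Longrightarrow> crosses e (i, k)"
  using crosses_via_endpoint[OF dissection ab_mem ab_crosses _ _ i_less k_less] .

lemma first_before:
  assumes "(x, y) \<in> D" "crosses (x, y) (i, k)" "{x, y} \<noteq> {a, b}"
  shows "before i k (a, b) (x, y)"
proof -
  have "\<not> crosses (i, a) (x, y)" "\<not> crosses (i, b) (x, y)"
    using ia_uncrossed ib_uncrossed assms(1) unfolding uncrossed_def by auto
  moreover have "x < n" "y < n"
    using dissection_memD[OF dissection assms(1)] by auto
  ultimately show ?thesis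
    using before_if_sides_uncrossed[OF vertex_facts(1,2) i_less k_less _ _ ab_crosses]
      assms(2,3) by blast
qed

lemma crosses_bk:
  assumes "(x, y) \<in> D" "crosses (x, y) (i, k)" "x \<noteq> b" "y \<noteq> b"
  shows "crosses (x, y) (b, k)"
proof -
  have "x < n" "y < n"
    using dissection_memD[OF dissection assms(1)] by auto
  moreover have "before i k (a, b) (x, y)"
    using first_before[OF assms(1,2)] assms by (auto simp: doubleton_eq_iff)
  ultimately show ?thesis
    using crosses_endpoint_diag_if_before[OF vertex_facts(1,2) i_less k_less _ _ ab_crosses]
      assms(2-4) by blast
qed

lemma crosses_ab_from_i:
  assumes "(x, y) \<in> D" "crosses (x, y) (i, k)" "x \<notin> {a, b}"
  shows "crosses (i, x) (a, b)"
proof -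
  have "x < n" "y < n"
    using dissection_memD[OF dissection assms(1)] by auto
  moreover have "before i k (a, b) (x, y)"
    using first_before[OF assms(1,2)] assms by (auto simp: doubleton_eq_iff)
  ultimately show ?thesis
    using crosses_from_start_if_before[OF vertex_facts(1,2) i_less k_less _ _ ab_crosses]
      assms(3) by blast
qed

lemma b_mem_earlier:
  assumes "(f, g) \<in> D" "crosses (f, g) (i, k)" "(x, y) \<in> D" "crosses (x, y) (i, k)"
    "before i k (f, g) (x, y)" "b \<in> {x, y}"
  shows "b \<in> {f, g}"
proof (cases "{f, g} = {a, b}")
  case False
  have "x < n" "y < n" "f < n" "g < n"
    using dissection_memD[OF dissection] assms(1,3) by auto
  moreover have "before i k (a, b) (f, g)"
    using first_before False assms(1,2) by blast
  ultimately show ?thesis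
    using before_shared_vertex[OF vertex_facts(1,2) i_less k_less _ _ _ _ vertex_facts(2)
        ab_crosses assms(2)] assms(5,6) by blast
qed auto

lemma retarget:
  assumes "x < n" "crosses (i, x) (a, b)"
  shows "first_diagonal n D i x a b"
  using first_diagonal_axioms assms crosses_commute unfolding first_diagonal_def by metis

end

section \<open>T-walks\<close>

lemma before_start_irrelevant: "before i k = before j k"
  by (intro ext) (simp add: before_def)

text \<open>
  The conditions of \<^const>\<open>is_tpath\<close> except those on the start vertex: the diagonal (i, k)
  serves only as the reference crossed by the odd steps, so that tails of T-paths are T-walks.
\<close>

definition twalk :: "nat \<Rightarrow> (nat \<times> nat) set \<Rightarrow> nat \<Rightarrow> nat \<Rightarrow> nat list \<Rightarrow> bool" where
  "twalk n D i k p \<longleftrightarrow>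
     length p \<ge> 2 \<and> last p = k \<and> set p \<subseteq> {..<n}
     \<and> (\<forall>j < length p - 1. p ! j \<noteq> p ! (j + 1))
     \<and> (\<forall>j < length p - 1. \<forall>l < length p - 1. j \<noteq> l \<longrightarrow>
            {p ! j, p ! (j + 1)} \<noteq> {p ! l, p ! (l + 1)})
     \<and> (\<forall>j < length p - 1. \<forall>d\<in>D. \<not> crosses (p ! j, p ! (j + 1)) d)
     \<and> (\<forall>j < length p - 1. odd j \<longrightarrow>
            (p ! j, p ! (j + 1)) \<in> D \<and> crosses (p ! j, p ! (j + 1)) (i, k))
     \<and> (\<forall>j < length p - 1. \<forall>l < length p - 1. odd j \<longrightarrow> odd l \<longrightarrow> j < l \<longrightarrow>
            before i k (p ! j, p ! (j + 1)) (p ! l, p ! (l + 1)))"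

lemma is_tpath_iff_twalk: "is_tpath n D i k p \<longleftrightarrow> hd p = i \<and> i \<noteq> k \<and> twalk n D i k p"
  unfolding is_tpath_def twalk_def by blast

definition avoids_step :: "nat list \<Rightarrow> nat set \<Rightarrow> bool" where
  "avoids_step q s \<longleftrightarrow> (\<forall>j < length q - 1. {q ! j, q ! (j + 1)} \<noteq> s)"

definition odd_steps_after :: "nat \<Rightarrow> nat \<Rightarrow> nat \<times> nat \<Rightarrow> nat list \<Rightarrow> bool" where
  "odd_steps_after i k e q \<longleftrightarrow> (\<forall>j < length q - 1. odd j \<longrightarrow> before i k e (q ! j, q ! (j + 1)))"

lemma twalk_length: "twalk n D i k p \<Longrightarrow> length p \<ge> 2"
  by (simp add: twalk_def)

lemma is_tpath_ConsE:
  assumes "is_tpath n D i k p"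
  obtains y q where "p = i # y # q"
  using assms twalk_length[of n D i k p]
  by (auto simp: is_tpath_iff_twalk numeral_2_eq_2 Suc_le_length_iff)

lemma twalk_step_ne: "twalk n D i k p \<Longrightarrow> j < length p - 1 \<Longrightarrow> p ! j \<noteq> p ! (j + 1)"
  by (simp add: twalk_def)

lemma twalk_steps_distinct:
  "twalk n D i k p \<Longrightarrow> j < length p - 1 \<Longrightarrow> l < length p - 1 \<Longrightarrow> j \<noteq> l \<Longrightarrow>
    {p ! j, p ! (j + 1)} \<noteq> {p ! l, p ! (l + 1)}"
  by (simp add: twalk_def)

lemma twalk_odd_step:
  "twalk n D i k p \<Longrightarrow> l < length p - 1 \<Longrightarrow> odd l \<Longrightarrow>
    (p ! l, p ! (l + 1)) \<in> D \<and> crosses (p ! l, p ! (l + 1)) (i, k)"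
  by (simp add: twalk_def)

lemma twalk_before:
  "twalk n D i k p \<Longrightarrow> j < length p - 1 \<Longrightarrow> l < length p - 1 \<Longrightarrow> odd j \<Longrightarrow> odd l \<Longrightarrow> j < l \<Longrightarrow>
    before i k (p ! j, p ! (j + 1)) (p ! l, p ! (l + 1))"
  by (simp add: twalk_def)

lemma twalk_Cons_Cons:
  assumes "length q \<ge> 2"
  shows "twalk n D i k (x # y # q) \<longleftrightarrow>
    x < n \<and> y < n \<and> x \<noteq> y \<and> y \<noteq> q ! 0 \<and> {x, y} \<noteq> {y, q ! 0}
    \<and> uncrossed D (x, y) \<and> uncrossed D (y, q ! 0)
    \<and> (y, q ! 0) \<in> D \<and> crosses (y, q ! 0) (i, k)
    \<and> avoids_step q {x, y} \<and> avoids_step q {y, q ! 0} \<and> odd_steps_after i k (y, q ! 0) q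
    \<and> twalk n D i k q"
proof -
  have len: "length (x # y # q) - 1 = Suc (Suc (length q - 1))"
    using assms by simp
  have last: "last (x # y # q) = last q"
    using assms by (cases q) auto
  show ?thesis
    unfolding twalk_def[of n D i k "x # y # q"] avoids_step_def odd_steps_after_def uncrossed_def
      len last
    unfolding All_less_Suc2
    using assms by (auto simp: twalk_def)
qed

lemma twalk_pair: "twalk n D i k [x, y] \<longleftrightarrow> x < n \<and> y < n \<and> y = k \<and> x \<noteq> y \<and> uncrossed D (x, y)"
  unfolding twalk_def uncrossed_def by (auto simp: less_Suc_eq)

lemma not_twalk_triple: "\<not> twalk n D i k [x, y, z]"
proof
  assume "twalk n D i k [x, y, z]"
  then have "z = k" "crosses (y, z) (i, k)"
    unfolding twalk_def by (auto dest: spec[of _ 1])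
  then show False
    using crosses_distinct by blast
qed

lemma twalk_cases:
  assumes "twalk n D i k p"
  obtains x where "p = [x, k]" | x y q where "p = x # y # q" "length q \<ge> 2"
proof -
  have "length p \<ge> 2" "last p = k"
    using assms unfolding twalk_def by auto
  then obtain x y q where p: "p = x # y # q"
    by (auto simp: numeral_2_eq_2 Suc_le_length_iff)
  show thesis
  proof (cases q)
    case Nil
    then show thesis
      using that(1) \<open>last p = k\<close> p by simp
  next
    case (Cons z r)
    then have "r \<noteq> []"
      using assms p not_twalk_triple by blast
    then show thesis
      using that(2) p Cons by (simp add: Suc_le_eq)
  qed
qed

lemma twalk_Cons_Cons_length: "twalk n D i k (x # y # q) \<Longrightarrow> y \<noteq> k \<Longrightarrow> length q \<ge> 2"
  by (erule twalk_cases) auto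

lemma twalk_retarget:
  assumes "twalk n D j k q" "\<forall>l < length q - 1. odd l \<longrightarrow> crosses (q ! l, q ! (l + 1)) (i, k)"
  shows "twalk n D i k q"
  using assms unfolding twalk_def before_start_irrelevant[of j k i] by auto

lemma notin_tl_twalk:
  assumes "twalk n D j k q" "\<forall>l < length q - 1. odd l \<longrightarrow> q ! l \<noteq> v \<and> q ! (l + 1) \<noteq> v" "k \<noteq> v"
  shows "v \<notin> set (tl q)"
proof
  assume "v \<in> set (tl q)"
  then obtain m where m: "m < length q - 1" "q ! Suc m = v"
    by (auto simp: in_set_conv_nth nth_tl)
  consider "Suc m = length q - 1" | "odd (Suc m)" "Suc m < length q - 1" | "odd m"
    using m by fastforce
  then show False
  proof cases
    case 1
    moreover have "q \<noteq> []"
      using m by auto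
    ultimately have "q ! Suc m = last q"
      by (simp add: last_conv_nth)
    then show False
      using assms(1,3) m unfolding twalk_def by simp
  qed (use assms(2) m in auto)
qed

lemma start_notin_tl_twalk:
  assumes "twalk n D i k q" "i \<noteq> k"
  shows "i \<notin> set (tl q)"
proof (rule notin_tl_twalk[OF assms(1) _ assms(2)[symmetric]])
  show "\<forall>l < length q - 1. odd l \<longrightarrow> q ! l \<noteq> i \<and> q ! (l + 1) \<noteq> i"
    using twalk_odd_step[OF assms(1)] crosses_distinct by blast
qed

lemma odd_steps_after_start_irrelevant: "odd_steps_after i k e q = odd_steps_after j k e q"
  unfolding odd_steps_after_def before_start_irrelevant[of i k j] ..

lemma nth_in_set_tl: "0 < m \<Longrightarrow> m < length q \<Longrightarrow> q ! m \<in> set (tl q)"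
  by (cases q; cases m) auto

lemma avoids_step_if_notin:
  assumes "v \<notin> set q"
  shows "avoids_step q {v, w}"
  unfolding avoids_step_def
proof (intro allI impI)
  fix j assume "j < length q - 1"
  then have "q ! j \<in> set q" "q ! (j + 1) \<in> set q"
    by auto
  then show "{q ! j, q ! (j + 1)} \<noteq> {v, w}"
    using assms by (auto simp: doubleton_eq_iff)
qed

lemma avoids_step_start:
  assumes "q ! 0 = b" "q ! 1 \<noteq> a" "b \<notin> set (tl q)"
  shows "avoids_step q {a, b}"
  unfolding avoids_step_def
proof (intro allI impI)
  fix j assume j: "j < length q - 1"
  show "{q ! j, q ! (j + 1)} \<noteq> {a, b}"
  proof (cases j)
    case 0
    then show ?thesis
      using assms by (auto simp: doubleton_eq_iff)
  next
    case (Suc j')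
    then have "q ! j \<in> set (tl q)" "q ! (j + 1) \<in> set (tl q)"
      using j nth_in_set_tl[of j q] nth_in_set_tl[of "j + 1" q] by auto
    then show ?thesis
      using assms(3) by (auto simp: doubleton_eq_iff)
  qed
qed

lemma finite_tpaths: "finite (tpaths n D i k)"
proof (rule finite_subset)
  show "tpaths n D i k \<subseteq> {p. set p \<subseteq> {..<n} \<and> length p \<le> n * n + 1}"
  proof
    fix p assume "p \<in> tpaths n D i k"
    then have "twalk n D i k p"
      by (simp add: tpaths_def is_tpath_iff_twalk)
    then have vertices: "set p \<subseteq> {..<n}"
      and distinct_steps: "\<And>j l. j < length p - 1 \<Longrightarrow> l < length p - 1 \<Longrightarrow> j \<noteq> l \<Longrightarrow>
        {p ! j, p ! (j + 1)} \<noteq> {p ! l, p ! (l + 1)}"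
      unfolding twalk_def by blast+
    let ?step = "\<lambda>j. (p ! j, p ! (j + 1))"
    have "inj_on ?step {..<length p - 1}"
      by (rule inj_onI) (use distinct_steps in fastforce)
    moreover have "?step ` {..<length p - 1} \<subseteq> {..<n} \<times> {..<n}"
    proof
      fix e assume "e \<in> ?step ` {..<length p - 1}"
      then obtain j where j: "j < length p - 1" "e = ?step j"
        by auto
      then have "p ! j \<in> set p" "p ! (j + 1) \<in> set p"
        by auto
      then show "e \<in> {..<n} \<times> {..<n}"
        using vertices j(2) by auto
    qed
    ultimately have "card {..<length p - 1} \<le> card ({..<n} \<times> {..<n})"
      by (rule card_inj_on_le) simp
    then show "p \<in> {p. set p \<subseteq> {..<n} \<and> length p \<le> n * n + 1}"
      using vertices by (simp add: card_cartesian_product)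
  qed
  show "finite {p. set p \<subseteq> {..<n} \<and> length p \<le> n * n + 1}"
    by (rule finite_lists_length_le) simp
qed

context first_diagonal
begin

lemma twalk_retarget_bk_ik:
  assumes "twalk n D b k q"
  shows "twalk n D i k q \<and> i \<notin> set (tl q)"
proof -
  have "\<forall>l < length q - 1. odd l \<longrightarrow> crosses (q ! l, q ! (l + 1)) (i, k)"
    using twalk_odd_step[OF assms] crosses_ik_if_crosses_bk by blast
  then have "twalk n D i k q"
    by (rule twalk_retarget[OF assms])
  then show ?thesis
    using start_notin_tl_twalk vertex_facts(5) by blast
qed

lemma twalk_retarget_ik_bk:
  assumes "twalk n D i k q" "\<forall>l < length q - 1. odd l \<longrightarrow> q ! l \<noteq> b \<and> q ! (l + 1) \<noteq> b"
  shows "twalk n D b k q \<and> b \<notin> set (tl q)"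
proof -
  have "\<forall>l < length q - 1. odd l \<longrightarrow> crosses (q ! l, q ! (l + 1)) (b, k)"
    using twalk_odd_step[OF assms(1)] assms(2) crosses_bk by blast
  then show ?thesis
    using twalk_retarget[OF assms(1)] notin_tl_twalk[OF assms(1,2)] vertex_facts(9) by blast
qed

lemma tpath_second_vertex:
  assumes "is_tpath n D i k p"
  shows "\<exists>q. p = i # a # q \<or> p = i # b # q"
proof -
  have t: "twalk n D i k p" "hd p = i"
    using assms by (simp_all add: is_tpath_iff_twalk)
  then obtain y q where p: "p = i # y # q" and len: "length q \<ge> 2"
    using t not_uncrossed by (cases rule: twalk_cases[OF t(1)]) (auto simp: twalk_pair)
  have "twalk n D i k (i # y # q)"
    using t(1) p by simp
  then have "uncrossed D (i, y)" "(y, q ! 0) \<in> D" "crosses (y, q ! 0) (i, k)"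
    unfolding twalk_Cons_Cons[OF len] by auto
  then have "y \<in> {a, b}"
    using crosses_ab_from_i ab_mem unfolding uncrossed_def by blast
  then show ?thesis
    using p by blast
qed

lemma odd_steps_after_first:
  assumes "twalk n D i k q" "b \<notin> set (tl q)"
  shows "odd_steps_after i k (a, b) q"
  unfolding odd_steps_after_def
proof (intro allI impI)
  fix l assume l: "l < length q - 1" "odd l"
  then have "q ! l \<in> set (tl q)" "q ! (l + 1) \<in> set (tl q)"
    using nth_in_set_tl[of l q] nth_in_set_tl[of "l + 1" q] by (auto simp: odd_pos)
  then show "before i k (a, b) (q ! l, q ! (l + 1))"
    using first_before twalk_odd_step[OF assms(1) l] assms(2) by (auto simp: doubleton_eq_iff)
qed

lemma odd_steps_avoid_b:
  assumes "twalk n D i k q" "q ! 0 = b" "l < length q - 1" "odd l"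
  shows "q ! l \<noteq> b \<and> q ! (l + 1) \<noteq> b"
proof -
  have "0 < length q - 1" "1 < length q - 1"
    using assms(3,4) odd_pos by fastforce+
  then have "q ! 0 \<noteq> q ! (0 + 1)" "{q ! 0, q ! (0 + 1)} \<noteq> {q ! 1, q ! (1 + 1)}"
    using twalk_step_ne[OF assms(1)] twalk_steps_distinct[OF assms(1)] by blast+
  then have first_step: "q ! 1 \<noteq> b" "q ! (1 + 1) \<noteq> b"
    using assms(2) by (auto simp: doubleton_eq_iff)
  show ?thesis
  proof (cases "l = 1")
    case False
    with assms(4) have "1 < l"
      using odd_pos by fastforce
    then have "before i k (q ! 1, q ! (1 + 1)) (q ! l, q ! (l + 1))"
      using twalk_before[OF assms(1) \<open>1 < length q - 1\<close> assms(3) _ assms(4)] by simp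
    moreover have "(q ! 1, q ! (1 + 1)) \<in> D" "crosses (q ! 1, q ! (1 + 1)) (i, k)"
      using twalk_odd_step[OF assms(1) \<open>1 < length q - 1\<close>] by simp_all
    ultimately have "b \<in> {q ! l, q ! (l + 1)} \<Longrightarrow> b \<in> {q ! 1, q ! (1 + 1)}"
      using b_mem_earlier twalk_odd_step[OF assms(1,3,4)] by blast
    then show ?thesis
      using first_step by auto
  qed (use first_step in simp)
qed

lemma tpath_prepend_ia:
  assumes "is_tpath n D b k q" "q ! 1 \<noteq> a"
  shows "is_tpath n D i k (i # a # q)"
proof -
  have t: "twalk n D b k q" and "hd q = b"
    using assms(1) by (simp_all add: is_tpath_iff_twalk)
  have len: "length q \<ge> 2"
    using twalk_length[OF t] .
  then have q0: "q ! 0 = b"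
    using \<open>hd q = b\<close> by (cases q) auto
  have ti: "twalk n D i k q" "i \<notin> set (tl q)"
    using twalk_retarget_bk_ik[OF t] by auto
  have b_tl: "b \<notin> set (tl q)"
    using start_notin_tl_twalk[OF t] vertex_facts(9) by auto
  have "i \<notin> set q"
    using ti(2) q0 len vertex_facts(7) by (cases q) auto
  then have "twalk n D i k (i # a # q)"
    unfolding twalk_Cons_Cons[OF len] q0
    using i_less vertex_facts ab_mem ab_crosses ia_uncrossed dissection_uncrossed[OF dissection ab_mem]
      avoids_step_if_notin avoids_step_start[OF q0 assms(2) b_tl] odd_steps_after_first[OF ti(1) b_tl]
      ti(1) by (auto simp: doubleton_eq_iff)
  then show ?thesis
    using vertex_facts(5) by (simp add: is_tpath_iff_twalk)
qed

lemma tpath_drop_ia: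
  assumes "is_tpath n D i k (i # a # q)" "q ! 0 = b"
  shows "is_tpath n D b k q \<and> q ! 1 \<noteq> a"
proof -
  have t: "twalk n D i k (i # a # q)"
    using assms(1) by (simp add: is_tpath_iff_twalk)
  have len: "length q \<ge> 2"
    using twalk_Cons_Cons_length[OF t] vertex_facts(8) by auto
  have ab: "avoids_step q {a, b}" and tq: "twalk n D i k q"
    using t unfolding twalk_Cons_Cons[OF len] assms(2) by auto
  have "twalk n D b k q"
    using twalk_retarget_ik_bk[OF tq] odd_steps_avoid_b[OF tq assms(2)] by blast
  moreover have "hd q = b"
    using assms(2) len by (cases q) auto
  moreover have "q ! 1 \<noteq> a"
    using ab len assms(2) unfolding avoids_step_def by (auto dest!: spec[of _ 0])
  ultimately show ?thesis
    using vertex_facts(9) by (simp add: is_tpath_iff_twalk)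
qed

lemma tpath_replace_b_by_i:
  assumes "is_tpath n D b k (b # a # q)"
  shows "is_tpath n D i k (i # a # q) \<and> q ! 0 \<noteq> b"
proof -
  have t: "twalk n D b k (b # a # q)"
    using assms by (simp add: is_tpath_iff_twalk)
  have len: "length q \<ge> 2"
    using twalk_Cons_Cons_length[OF t] vertex_facts(8) by auto
  define z where "z = q ! 0"
  have step: "uncrossed D (a, z)" "(a, z) \<in> D" "crosses (a, z) (b, k)" "z \<noteq> b"
      "avoids_step q {a, z}" "odd_steps_after b k (a, z) q" "twalk n D b k q"
    using t unfolding twalk_Cons_Cons[OF len] z_def[symmetric] by (auto simp: doubleton_eq_iff)
  have az: "crosses (a, z) (i, k)"
    using crosses_ik_if_crosses_bk step(2,3) by blast
  have ti: "twalk n D i k q" "i \<notin> set (tl q)"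
    using twalk_retarget_bk_ik[OF step(7)] by auto
  have "i \<notin> set q"
    using ti(2) crosses_distinct[OF az] len unfolding z_def by (cases q) auto
  then have "twalk n D i k (i # a # q)"
    unfolding twalk_Cons_Cons[OF len] z_def[symmetric]
    using i_less vertex_facts ia_uncrossed step az ti avoids_step_if_notin
      odd_steps_after_start_irrelevant[of b k "(a, z)" q i] crosses_distinct[OF az]
    by (auto simp: doubleton_eq_iff)
  then show ?thesis
    using vertex_facts(5) step(4) z_def by (simp add: is_tpath_iff_twalk)
qed

lemma tpath_replace_i_by_b:
  assumes "is_tpath n D i k (i # a # q)" "q ! 0 \<noteq> b"
  shows "is_tpath n D b k (b # a # q)"
proof -
  have t: "twalk n D i k (i # a # q)"
    using assms(1) by (simp add: is_tpath_iff_twalk)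
  have len: "length q \<ge> 2"
    using twalk_Cons_Cons_length[OF t] vertex_facts(8) by auto
  define z where "z = q ! 0"
  have step: "uncrossed D (a, z)" "(a, z) \<in> D" "crosses (a, z) (i, k)" "a \<noteq> z"
      "avoids_step q {a, z}" "odd_steps_after i k (a, z) q" "twalk n D i k q"
    using t unfolding twalk_Cons_Cons[OF len] z_def[symmetric] by auto
  have "z \<noteq> b"
    using assms(2) z_def by simp
  have "\<forall>l < length q - 1. odd l \<longrightarrow> q ! l \<noteq> b \<and> q ! (l + 1) \<noteq> b"
  proof (intro allI impI)
    fix l assume l: "l < length q - 1" "odd l"
    have "b \<in> {q ! l, q ! (l + 1)} \<Longrightarrow> b \<in> {a, z}"
      using b_mem_earlier[OF step(2,3)] twalk_odd_step[OF step(7) l] step(6) l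
      unfolding odd_steps_after_def by blast
    then show "q ! l \<noteq> b \<and> q ! (l + 1) \<noteq> b"
      using vertex_facts(3) \<open>z \<noteq> b\<close> by auto
  qed
  then have tb: "twalk n D b k q" "b \<notin> set (tl q)"
    using twalk_retarget_ik_bk[OF step(7)] by auto
  have "b \<notin> set q"
    using tb(2) \<open>z \<noteq> b\<close> len unfolding z_def by (cases q) auto
  moreover have "crosses (a, z) (b, k)"
    using crosses_bk[OF step(2,3)] vertex_facts(3) \<open>z \<noteq> b\<close> by blast
  ultimately have "twalk n D b k (b # a # q)"
    unfolding twalk_Cons_Cons[OF len] z_def[symmetric]
    using vertex_facts step tb(1) \<open>z \<noteq> b\<close> avoids_step_if_notin
      dissection_uncrossed[OF dissection vertex_facts(4)]
      odd_steps_after_start_irrelevant[of i k "(a, z)" q b]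
    by (auto simp: doubleton_eq_iff)
  then show ?thesis
    using vertex_facts(9) by (simp add: is_tpath_iff_twalk)
qed

end

section \<open>T-path sums and exchange relations\<close>

definition tsum :: "nat \<Rightarrow> (nat \<times> nat) set \<Rightarrow> (nat \<Rightarrow> nat \<Rightarrow> 'a::ring_1) \<Rightarrow> nat \<Rightarrow> nat \<Rightarrow> 'a" where
  "tsum n D c i k = (\<Sum>p\<in>tpaths n D i k. tweight c p)"

lemma is_unit_uinv: "is_unit x \<Longrightarrow> x * uinv x = 1 \<and> uinv x * x = 1"
  unfolding is_unit_def uinv_def by (rule someI_ex)

lemma tpaths_uncrossed:
  assumes "uncrossed D (i, k)" "i \<noteq> k" "i < n" "k < n"
  shows "tpaths n D i k = {[i, k]}"
proof
  show "tpaths n D i k \<subseteq> {[i, k]}"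
  proof
    fix p assume "p \<in> tpaths n D i k"
    then have t: "twalk n D i k p" "hd p = i"
      by (simp_all add: tpaths_def is_tpath_iff_twalk)
    then show "p \<in> {[i, k]}"
    proof (cases rule: twalk_cases[OF t(1)])
      case (2 x y q)
      then have "(y, q ! 0) \<in> D" "crosses (y, q ! 0) (i, k)"
        using t(1) twalk_Cons_Cons by auto
      then show ?thesis
        using assms(1) crosses_commute unfolding uncrossed_def by blast
    qed simp
  qed
  show "{[i, k]} \<subseteq> tpaths n D i k"
    using assms by (simp add: tpaths_def is_tpath_iff_twalk twalk_pair)
qed

lemma tsum_uncrossed: "uncrossed D (i, k) \<Longrightarrow> i \<noteq> k \<Longrightarrow> i < n \<Longrightarrow> k < n \<Longrightarrow> tsum n D c i k = c i k"
  by (simp add: tsum_def tpaths_uncrossed)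

lemma tsum_same: "tsum n D c i i = 0"
  by (simp add: tsum_def tpaths_def is_tpath_def)

context first_diagonal
begin

definition lift_tpath :: "nat list \<Rightarrow> nat list" where
  "lift_tpath q = (if q ! 1 = a then i # tl q else i # a # q)"

definition lower_tpath :: "nat list \<Rightarrow> nat list" where
  "lower_tpath p = (if p ! 2 = b then drop 2 p else b # tl p)"

lemma lift_tpath:
  assumes "q \<in> tpaths n D b k"
  shows "lift_tpath q \<in> {p \<in> tpaths n D i k. p ! 1 = a} \<and> lower_tpath (lift_tpath q) = q"
proof -
  have q: "is_tpath n D b k q"
    using assms by (simp add: tpaths_def)
  then obtain y r where qr: "q = b # y # r"
    by (rule is_tpath_ConsE)
  show ?thesis
  proof (cases "y = a")
    case True
    then have "is_tpath n D i k (i # a # r) \<and> r ! 0 \<noteq> b"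
      using tpath_replace_b_by_i q qr by simp
    then show ?thesis
      using True qr by (simp add: lift_tpath_def lower_tpath_def tpaths_def)
  next
    case False
    then have "is_tpath n D i k (i # a # q)"
      using tpath_prepend_ia q qr by simp
    then show ?thesis
      using qr False by (simp add: lift_tpath_def lower_tpath_def tpaths_def)
  qed
qed

lemma lower_tpath:
  assumes "p \<in> {p \<in> tpaths n D i k. p ! 1 = a}"
  shows "lower_tpath p \<in> tpaths n D b k \<and> lift_tpath (lower_tpath p) = p"
proof -
  have p: "is_tpath n D i k p" "p ! 1 = a"
    using assms by (simp_all add: tpaths_def)
  then obtain r where pr: "p = i # a # r"
    using tpath_second_vertex vertex_facts(3) by fastforce
  show ?thesis
  proof (cases "r ! 0 = b")
    case True
    then have "is_tpath n D b k r \<and> r ! 1 \<noteq> a"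
      using tpath_drop_ia p pr by simp
    then show ?thesis
      using pr True by (simp add: lift_tpath_def lower_tpath_def tpaths_def)
  next
    case False
    then have "is_tpath n D b k (b # a # r)"
      using tpath_replace_i_by_b p pr by simp
    then show ?thesis
      using pr False by (simp add: lift_tpath_def lower_tpath_def tpaths_def)
  qed
qed

lemma tweight_lift_tpath:
  fixes c :: "nat \<Rightarrow> nat \<Rightarrow> 'a::ring_1"
  assumes "is_unit (c b a)" "q \<in> tpaths n D b k"
  shows "tweight c (lift_tpath q) = c i a * uinv (c b a) * tweight c q"
proof -
  have q: "is_tpath n D b k q"
    using assms(2) by (simp add: tpaths_def)
  then obtain y r where qr: "q = b # y # r"
    by (rule is_tpath_ConsE)
  show ?thesis
  proof (cases "y = a")
    case True
    have "length r \<ge> 2"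
      using twalk_Cons_Cons_length[of n D b k b a r] q qr True vertex_facts(8)
      by (auto simp: is_tpath_iff_twalk)
    then obtain z r' where "r = z # r'"
      by (cases r) auto
    moreover have "uinv (c b a) * (c b a * x) = x" for x
      using is_unit_uinv[OF assms(1)] by (simp flip: mult.assoc)
    ultimately show ?thesis
      using True qr by (simp add: lift_tpath_def mult.assoc)
  next
    case False
    then show ?thesis
      using qr by (simp add: lift_tpath_def)
  qed
qed

lemma sum_tpaths_second_a:
  fixes c :: "nat \<Rightarrow> nat \<Rightarrow> 'a::ring_1"
  assumes "is_unit (c b a)"
  shows "(\<Sum>p\<in>{p \<in> tpaths n D i k. p ! 1 = a}. tweight c p) = c i a * uinv (c b a) * tsum n D c b k"
proof -
  have "(\<Sum>q\<in>tpaths n D b k. c i a * uinv (c b a) * tweight c q)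
      = (\<Sum>p\<in>{p \<in> tpaths n D i k. p ! 1 = a}. tweight c p)"
    by (rule sum.reindex_bij_witness[where j = lift_tpath and i = lower_tpath])
      (use lift_tpath lower_tpath tweight_lift_tpath[of c, OF assms] in auto)
  then show ?thesis
    by (simp add: tsum_def sum_distrib_left)
qed

lemma tsum_first_diagonal:
  fixes c :: "nat \<Rightarrow> nat \<Rightarrow> 'a::ring_1"
  assumes "is_unit (c a b)" "is_unit (c b a)"
  shows "tsum n D c i k = c i a * uinv (c b a) * tsum n D c b k + c i b * uinv (c a b) * tsum n D c a k"
proof -
  let ?A = "{p \<in> tpaths n D i k. p ! 1 = a}" and ?B = "{p \<in> tpaths n D i k. p ! 1 = b}"
  have "tpaths n D i k = ?A \<union> ?B"
    using tpath_second_vertex unfolding tpaths_def by fastforce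
  then have "tsum n D c i k = (\<Sum>p\<in>?A \<union> ?B. tweight c p)"
    by (simp add: tsum_def)
  also have "\<dots> = (\<Sum>p\<in>?A. tweight c p) + (\<Sum>p\<in>?B. tweight c p)"
    by (rule sum.union_disjoint) (use finite_tpaths vertex_facts(3) in auto)
  finally show ?thesis
    using sum_tpaths_second_a[of c, OF assms(2)] first_diagonal.sum_tpaths_second_a[OF swap, of c, OF assms(1)]
    by simp
qed

lemma tsum_first_diagonal_to:
  fixes c :: "nat \<Rightarrow> nat \<Rightarrow> 'a::ring_1"
  assumes "is_unit (c a b)" "is_unit (c b a)" "x < n" "x \<noteq> i" "x \<in> {a, b} \<or> crosses (i, x) (a, b)"
  shows "tsum n D c i x = c i a * uinv (c b a) * tsum n D c b x + c i b * uinv (c a b) * tsum n D c a x"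
proof -
  have "tsum n D c i a = c i a" "tsum n D c i b = c i b"
    using tsum_uncrossed[OF ia_uncrossed] tsum_uncrossed[OF ib_uncrossed] i_less vertex_facts
    by simp_all
  moreover have "tsum n D c a b = c a b" "tsum n D c b a = c b a"
    using tsum_uncrossed[OF dissection_uncrossed[OF dissection ab_mem]]
      tsum_uncrossed[OF dissection_uncrossed[OF dissection vertex_facts(4)]] vertex_facts
    by simp_all
  ultimately show ?thesis
    using assms tsum_first_diagonal[OF assms(1,2)] first_diagonal.tsum_first_diagonal[OF retarget]
      is_unit_uinv[OF assms(1)] is_unit_uinv[OF assms(2)]
    by (auto simp: tsum_same mult.assoc)
qed

end

definition exchange :: "(nat \<Rightarrow> nat \<Rightarrow> 'a::ring_1) \<Rightarrow> nat \<Rightarrow> nat \<Rightarrow> nat \<Rightarrow> nat \<Rightarrow> bool" where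
  "exchange S i k t v \<longleftrightarrow> S i k = S i t * uinv (S v t) * S v k + S i v * uinv (S t v) * S t k"

lemma exchange_at_endpoint:
  assumes "S t t = 0" "S v v = 0" "is_unit (S t v)" "is_unit (S v t)" "y \<in> {t, v}"
  shows "exchange S y k t v"
  using assms is_unit_uinv[OF assms(3)] is_unit_uinv[OF assms(4)] unfolding exchange_def by auto

lemma (in first_diagonal) exchange_tsum_step:
  fixes c :: "nat \<Rightarrow> nat \<Rightarrow> 'a::ring_1"
  assumes units: "\<forall>(t, v)\<in>D. is_unit (c t v)"
    and tv: "(t, v) \<in> D" "crosses (t, v) (i, k)"
    and exchange_b: "exchange (tsum n D c) b k t v" and exchange_a: "exchange (tsum n D c) a k t v"
  shows "exchange (tsum n D c) i k t v"
proof -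
  have units_ab: "is_unit (c a b)" "is_unit (c b a)"
    using units ab_mem vertex_facts(4) by auto
  have "t < n" "v < n" "t \<noteq> i" "v \<noteq> i"
    using dissection_memD[OF dissection tv(1)] crosses_distinct[OF tv(2)] by auto
  moreover have "t \<in> {a, b} \<or> crosses (i, t) (a, b)" "v \<in> {a, b} \<or> crosses (i, v) (a, b)"
    using crosses_ab_from_i[OF tv] crosses_ab_from_i[of v t] tv dissection_memD[OF dissection tv(1)]
      crosses_flip_left by blast+
  ultimately have "tsum n D c i t = c i a * uinv (c b a) * tsum n D c b t + c i b * uinv (c a b) * tsum n D c a t"
    "tsum n D c i v = c i a * uinv (c b a) * tsum n D c b v + c i b * uinv (c a b) * tsum n D c a v"
    using tsum_first_diagonal_to[OF units_ab] by blast+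
  then show ?thesis
    using tsum_first_diagonal[OF units_ab] exchange_a exchange_b
    unfolding exchange_def by (simp add: algebra_simps)
qed

lemma exchange_tsum:
  fixes c :: "nat \<Rightarrow> nat \<Rightarrow> 'a::ring_1"
  assumes dissection: "dissection n D" and units: "\<forall>(t, v)\<in>D. is_unit (c t v)"
    and "i < n" "k < n" "(t, v) \<in> D" "crosses (t, v) (i, k)"
  shows "exchange (tsum n D c) i k t v"
  using assms(3-6)
proof (induction "crossing_count D i k" arbitrary: i k rule: less_induct)
  case less
  have tv: "t < n" "v < n" "t \<noteq> v" "(v, t) \<in> D"
    using dissection_memD[OF dissection less.prems(3)] by auto
  have endpoint: "exchange (tsum n D c) y k t v" if "y \<in> {t, v}" for y
  proof (rule exchange_at_endpoint[OF tsum_same tsum_same _ _ that])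
    have "tsum n D c t v = c t v" "tsum n D c v t = c v t"
      using tsum_uncrossed[OF dissection_uncrossed[OF dissection less.prems(3)]]
        tsum_uncrossed[OF dissection_uncrossed[OF dissection tv(4)]] tv by simp_all
    then show "is_unit (tsum n D c t v)" "is_unit (tsum n D c v t)"
      using units less.prems(3) tv(4) by auto
  qed
  have reduce: "exchange (tsum n D c) y k t v" if "first_diagonal n D i k x y" for x y
  proof (cases "y \<in> {t, v}")
    case False
    interpret xy: first_diagonal n D i k x y
      by (rule that)
    have "crosses (t, v) (y, k)"
      using xy.crosses_bk less.prems(3,4) False by auto
    moreover have "crossing_count D y k < crossing_count D i k"
      using crossing_count_less[OF dissection xy.ab_mem xy.ab_crosses less.prems(1,2)] .
    ultimately show ?thesis
      using less.hyps xy.vertex_facts(2) less.prems(2,3) by blast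
  qed (rule endpoint)
  have "\<not> uncrossed D (i, k)"
    using less.prems(3,4) crosses_commute unfolding uncrossed_def by blast
  then obtain a b where ab: "first_diagonal n D i k a b"
    using first_diagonal_exists[OF dissection less.prems(1,2)] by blast
  show ?case
    using first_diagonal.exchange_tsum_step[OF ab units less.prems(3,4)]
      reduce[OF ab] reduce[OF first_diagonal.swap[OF ab]] by blast
qed

lemma exchange_unique:
  fixes S T :: "nat \<Rightarrow> nat \<Rightarrow> 'a::ring_1"
  assumes dissection: "dissection n D"
    and S: "\<And>i k t v. i < n \<Longrightarrow> k < n \<Longrightarrow> (t, v) \<in> D \<Longrightarrow> crosses (t, v) (i, k) \<Longrightarrow> exchange S i k t v"
    and T: "\<And>i k t v. i < n \<Longrightarrow> k < n \<Longrightarrow> (t, v) \<in> D \<Longrightarrow> crosses (t, v) (i, k) \<Longrightarrow> exchange T i k t v"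
    and agree: "\<And>i k. uncrossed D (i, k) \<Longrightarrow> i \<noteq> k \<Longrightarrow> i < n \<Longrightarrow> k < n \<Longrightarrow> S i k = T i k"
  shows "i < n \<Longrightarrow> k < n \<Longrightarrow> i \<noteq> k \<Longrightarrow> S i k = T i k"
proof (induction "crossing_count D i k" arbitrary: i k rule: less_induct)
  case less
  show ?case
  proof (cases "uncrossed D (i, k)")
    case False
    then obtain t v where tv: "(t, v) \<in> D" "crosses (t, v) (i, k)"
      using crosses_commute unfolding uncrossed_def by auto
    have vt: "(v, t) \<in> D" "crosses (v, t) (i, k)" "t < n" "v < n"
      using dissection_memD[OF dissection tv(1)] tv(2) crosses_flip_left by auto
    have "t \<noteq> i" "t \<noteq> k" "v \<noteq> i" "v \<noteq> k" "t \<noteq> v"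
      using crosses_distinct[OF tv(2)] by auto
    moreover have "crossing_count D i t < crossing_count D i k" "crossing_count D i v < crossing_count D i k"
        "crossing_count D t k < crossing_count D i k" "crossing_count D v k < crossing_count D i k"
      using crossing_count_less_mirror[OF dissection] crossing_count_less[OF dissection]
        tv vt less.prems(1,2) by blast+
    ultimately have "S i t = T i t" "S i v = T i v" "S t k = T t k" "S v k = T v k"
      using less.hyps less.prems(1,2) vt(3,4) by auto
    moreover have "S t v = T t v" "S v t = T v t"
      using agree dissection_uncrossed[OF dissection] tv(1) vt \<open>t \<noteq> v\<close> by auto
    ultimately show ?thesis
      using S[OF less.prems(1,2) tv] T[OF less.prems(1,2) tv] unfolding exchange_def by simp
  qed (use agree less.prems in blast)
qed

lemma weak_frieze_iff_exchange:
  "weak_frieze n D c \<longleftrightarrow> (\<forall>(t, v)\<in>D. is_unit (c t v)) \<and>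
    (\<forall>i k t v. i < n \<longrightarrow> k < n \<longrightarrow> (t, v) \<in> D \<longrightarrow> (v, t) \<in> D \<longrightarrow> crosses (i, k) (t, v) \<longrightarrow>
      exchange c i k t v)"
  unfolding weak_frieze_def exchange_def ..

lemma tsum_eq_if_weak_frieze:
  assumes "dissection n D" "weak_frieze n D c" "i < n" "k < n" "i \<noteq> k"
  shows "tsum n D c i k = c i k"
proof (rule exchange_unique[OF assms(1) _ _ tsum_uncrossed assms(3-5)])
  have "\<forall>(t, v)\<in>D. is_unit (c t v)"
    using assms(2) unfolding weak_frieze_iff_exchange by blast
  then show "exchange (tsum n D c) i k t v"
    if "i < n" "k < n" "(t, v) \<in> D" "crosses (t, v) (i, k)" for i k t v
    using exchange_tsum[OF assms(1)] that by blast
  show "exchange c i k t v" if "i < n" "k < n" "(t, v) \<in> D" "crosses (t, v) (i, k)" for i k t v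
    using assms(2) that dissection_memD[OF assms(1)] crosses_commute
    unfolding weak_frieze_iff_exchange by blast
qed

lemma weak_frieze_if_tsum_eq:
  assumes "dissection n D" "\<forall>(t, v)\<in>D. is_unit (c t v)"
    and tsum_eq: "\<And>i k. i < n \<Longrightarrow> k < n \<Longrightarrow> i \<noteq> k \<Longrightarrow> tsum n D c i k = c i k"
  shows "weak_frieze n D c"
  unfolding weak_frieze_iff_exchange
proof (intro conjI allI impI)
  fix i k t v assume that: "i < n" "k < n" "(t, v) \<in> D" "(v, t) \<in> D" "crosses (i, k) (t, v)"
  have "t < n" "v < n" "distinct [i, t, k, v]"
    using dissection_memD[OF assms(1) that(3)] that(5) by (auto simp: crosses_def)
  then show "exchange c i k t v"
    using exchange_tsum[OF assms(1,2) that(1-3)] tsum_eq that(1,2,5) crosses_commute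
    unfolding exchange_def by auto
qed (rule assms(2))

theorem theoremB:
  fixes n :: nat and D :: "(nat \<times> nat) set" and c :: "nat \<Rightarrow> nat \<Rightarrow> 'a::ring_1"
  assumes "n \<ge> 3" and "dissection n D"
  shows "weak_frieze n D c \<longleftrightarrow>
    ((\<forall>(t, v)\<in>D. is_unit (c t v)) \<and>
     (\<forall>i < n. \<forall>k < n. i \<noteq> k \<longrightarrow> c i k = (\<Sum>p\<in>tpaths n D i k. tweight c p)))"
proof
  assume wf: "weak_frieze n D c"
  then have "\<forall>(t, v)\<in>D. is_unit (c t v)"
    unfolding weak_frieze_iff_exchange by blast
  then show "(\<forall>(t, v)\<in>D. is_unit (c t v)) \<and>
      (\<forall>i < n. \<forall>k < n. i \<noteq> k \<longrightarrow> c i k = (\<Sum>p\<in>tpaths n D i k. tweight c p))"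
    using tsum_eq_if_weak_frieze[OF assms(2) wf] by (simp add: tsum_def)
next
  assume "(\<forall>(t, v)\<in>D. is_unit (c t v)) \<and>
      (\<forall>i < n. \<forall>k < n. i \<noteq> k \<longrightarrow> c i k = (\<Sum>p\<in>tpaths n D i k. tweight c p))"
  then show "weak_frieze n D c"
    by (intro weak_frieze_if_tsum_eq[OF assms(2)]) (auto simp: tsum_def)
qed

end
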